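(* Let $G_1$ and $G_2$ be two vertex-disjoint simple connected graphs with $|V(G_1)|=n_1$, $|V(G_2)|=n_2$, $|E(G_1)|=m_1$, $|E(G_2)|=m_2$. Then the edge S-join $G_1\underline{\vee}_S G_2$ satisfies \[ F(G_1\underline{\vee}_S G_2)=F(G_1)+F(G_2)+3m_1M_1(G_2)+6m_1^{2}m_2+m_1(n_2+2)^3+n_2m_1^{3}. \]
   Context: For a simple graph $G$ and $v\in V(G)$, $d_G(v)$ is the degree of $v$. The first Zagreb index is $M_1(G)=\sum_{v\in V(G)}d_G(v)^2$ and the F-index is $F(G)=\sum_{v\in V(G)}d_G(v)^3$. The subdivision graph $S(G)$ is obtained from $G$ by inserting a new vertex into each edge of $G$ (replacing each edge by a path of length 2); let $I(G)$ denote the set of these inserted vertices, so $V(S(G))=V(G)\cup I(G)$. The edge S-join $G_1\underline{\vee}_S G_2$ is the graph obtained from $S(G_1)$ and $G_2$ (taken vertex-disjoint) by joining each vertex of $I(G_1)$ to every vertex of $G_2$ by an edge. *)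

theory Defs
  imports Main
begin

definition simple_graph :: "'a set \<Rightarrow> 'a set set \<Rightarrow> bool" where
  "simple_graph V E \<longleftrightarrow> finite V \<and> (\<forall>e\<in>E. \<exists>u v. u \<noteq> v \<and> e = {u, v} \<and> u \<in> V \<and> v \<in> V)"

definition adj_rel :: "'a set set \<Rightarrow> ('a \<times> 'a) set" where
  "adj_rel E = {(u, v). {u, v} \<in> E}"

definition connected_graph :: "'a set \<Rightarrow> 'a set set \<Rightarrow> bool" where
  "connected_graph V E \<longleftrightarrow> V \<noteq> {} \<and> (\<forall>u\<in>V. \<forall>v\<in>V. (u, v) \<in> (adj_rel E)\<^sup>*)"

definition degree :: "'a set set \<Rightarrow> 'a \<Rightarrow> nat" where
  "degree E v = card {e \<in> E. v \<in> e}"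

definition zagreb1 :: "'a set \<Rightarrow> 'a set set \<Rightarrow> nat" where
  "zagreb1 V E = (\<Sum>v\<in>V. degree E v ^ 2)"

definition findex :: "'a set \<Rightarrow> 'a set set \<Rightarrow> nat" where
  "findex V E = (\<Sum>v\<in>V. degree E v ^ 3)"

text \<open>Vertices of the edge S-join: original vertices of G1, inserted vertices of S(G1)
  (one per edge of G1, labelled by that edge), and vertices of G2.\<close>
datatype ('a, 'b) sj_vertex = Old 'a | Ins "'a set" | Right 'b

definition sjoin_V :: "'a set \<Rightarrow> 'a set set \<Rightarrow> 'b set \<Rightarrow> ('a, 'b) sj_vertex set" where
  "sjoin_V V1 E1 V2 = Old ` V1 \<union> Ins ` E1 \<union> Right ` V2"

definition sjoin_E :: "'a set set \<Rightarrow> 'b set \<Rightarrow> 'b set set \<Rightarrow> ('a, 'b) sj_vertex set set" where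
  "sjoin_E E1 V2 E2 =
     {{Old u, Ins e} | u e. e \<in> E1 \<and> u \<in> e}
   \<union> {{Right x, Right y} | x y. {x, y} \<in> E2}
   \<union> {{Ins e, Right w} | e w. e \<in> E1 \<and> w \<in> V2}"

end

theory Submission
  imports Defs
begin

text \<open>Every inserted vertex has degree \<open>n\<^sub>2 + 2\<close>, old vertices keep their degree, and a
  vertex of \<open>G\<^sub>2\<close> gains exactly \<open>m\<^sub>1\<close> neighbours. Expanding the cube \<open>(d + m\<^sub>1)\<^sup>3\<close> over
  \<open>V(G\<^sub>2)\<close> and applying the handshake lemma to the linear term gives the formula.\<close>

lemma simple_graph_edge:
  assumes "simple_graph V E" and "e \<in> E"
  shows "card e = 2" and "e \<subseteq> V" and "finite e"
proof -
  obtain u v where "u \<noteq> v" "e = {u, v}" "u \<in> V" "v \<in> V"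
    using assms unfolding simple_graph_def by blast
  then show "card e = 2" and "e \<subseteq> V" and "finite e" by auto
qed

lemma simple_graph_finite_edges:
  assumes "simple_graph V E"
  shows "finite E"
proof -
  have "E \<subseteq> Pow V" using simple_graph_edge(2)[OF assms] by blast
  moreover have "finite V" using assms simple_graph_def by blast
  ultimately show ?thesis by (meson finite_Pow_iff finite_subset)
qed

lemma degree_eq_sum_indicator:
  assumes "finite E"
  shows "degree E v = (\<Sum>e\<in>E. if v \<in> e then 1 else 0)"
  unfolding degree_def using sum.inter_filter[OF assms, of "\<lambda>_. 1::nat" "\<lambda>e. v \<in> e"] by simp

lemma handshake:
  assumes "simple_graph V E"
  shows "(\<Sum>v\<in>V. degree E v) = 2 * card E"
proof -
  have fV: "finite V" using assms simple_graph_def by blast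
  have fE: "finite E" using assms by (rule simple_graph_finite_edges)
  have "(\<Sum>v\<in>V. degree E v) = (\<Sum>v\<in>V. \<Sum>e\<in>E. if v \<in> e then 1 else 0)"
    using fE by (simp add: degree_eq_sum_indicator)
  also have "\<dots> = (\<Sum>e\<in>E. \<Sum>v\<in>V. if v \<in> e then 1 else 0)" by (rule sum.swap)
  also have "\<dots> = (\<Sum>e\<in>E. card e)"
  proof (rule sum.cong)
    fix e assume "e \<in> E"
    then have "{v \<in> V. v \<in> e} = e" using simple_graph_edge(2)[OF assms] by blast
    then show "(\<Sum>v\<in>V. if v \<in> e then 1 else 0) = card e"
      using sum.inter_filter[OF fV, of "\<lambda>_. 1::nat" "\<lambda>v. v \<in> e"] by simp
  qed simp
  also have "\<dots> = 2 * card E" using simple_graph_edge(1)[OF assms] by simp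
  finally show ?thesis .
qed

lemma sjoin_E_right_edges:
  assumes "simple_graph V2 E2"
  shows "{{Right x, Right y} | x y. {x, y} \<in> E2} = ((`) Right ` E2 :: ('a, 'b) sj_vertex set set)"
proof (intro equalityI subsetI)
  fix f :: "('a, 'b) sj_vertex set"
  assume "f \<in> {{Right x, Right y} | x y. {x, y} \<in> E2}"
  then obtain x y where "f = {Right x, Right y}" "{x, y} \<in> E2" by blast
  then show "f \<in> (`) Right ` E2" by (intro image_eqI[of _ _ "{x, y}"]) auto
next
  fix f :: "('a, 'b) sj_vertex set"
  assume "f \<in> (`) Right ` E2"
  then obtain e where e: "e \<in> E2" "f = Right ` e" by blast
  with assms obtain u v where "e = {u, v}" unfolding simple_graph_def by blast
  with e show "f \<in> {{Right x, Right y} | x y. {x, y} \<in> E2}" by (auto simp del: insert_image)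
qed

lemma degree_sjoin_Old:
  fixes E1 :: "'a set set" and V2 :: "'b set"
  shows "degree (sjoin_E E1 V2 E2) (Old u) = degree E1 u"
proof -
  have "{f \<in> sjoin_E E1 V2 E2. Old u \<in> f} = (\<lambda>e. {Old u, Ins e}) ` {e \<in> E1. u \<in> e}"
    unfolding sjoin_E_def by auto
  then have "degree (sjoin_E E1 V2 E2) (Old u)
      = card ((\<lambda>e. {Old u, Ins e}) ` {e \<in> E1. u \<in> e} :: ('a, 'b) sj_vertex set set)"
    unfolding degree_def by simp
  also have "\<dots> = degree E1 u"
    unfolding degree_def by (rule card_image) (auto simp: inj_on_def doubleton_eq_iff)
  finally show ?thesis .
qed

lemma degree_sjoin_Ins:
  fixes E1 :: "'a set set" and V2 :: "'b set"
  assumes "e \<in> E1" and "finite e" and "finite V2"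
  shows "degree (sjoin_E E1 V2 E2) (Ins e) = card e + card V2"
proof -
  let ?A = "(\<lambda>u. {Old u, Ins e}) ` e :: ('a, 'b) sj_vertex set set"
  let ?B = "(\<lambda>w. {Ins e, Right w}) ` V2"
  have "{f \<in> sjoin_E E1 V2 E2. Ins e \<in> f} = ?A \<union> ?B"
    unfolding sjoin_E_def using assms(1) by auto
  then have "degree (sjoin_E E1 V2 E2) (Ins e) = card (?A \<union> ?B)"
    unfolding degree_def by simp
  also have "\<dots> = card ?A + card ?B"
    using assms(2,3) by (intro card_Un_disjoint) (auto simp: doubleton_eq_iff)
  also have "\<dots> = card e + card V2"
    by (auto intro!: arg_cong2[where f = "(+)"] card_image simp: inj_on_def doubleton_eq_iff)
  finally show ?thesis .
qed

lemma degree_sjoin_Right: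
  fixes E1 :: "'a set set" and V2 :: "'b set"
  assumes "simple_graph V2 E2" and "finite E1" and "x \<in> V2"
  shows "degree (sjoin_E E1 V2 E2) (Right x) = degree E2 x + card E1"
proof -
  let ?A = "(`) Right ` {e \<in> E2. x \<in> e} :: ('a, 'b) sj_vertex set set"
  let ?B = "(\<lambda>e. {Ins e, Right x}) ` E1"
  have "{f \<in> sjoin_E E1 V2 E2. Right x \<in> f} = ?A \<union> ?B"
    unfolding sjoin_E_def sjoin_E_right_edges[OF assms(1)] using assms(3) by auto
  then have "degree (sjoin_E E1 V2 E2) (Right x) = card (?A \<union> ?B)"
    unfolding degree_def by simp
  also have "\<dots> = card ?A + card ?B"
    using simple_graph_finite_edges[OF assms(1)] assms(2) by (intro card_Un_disjoint) auto
  also have "\<dots> = degree E2 x + card E1"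
    unfolding degree_def
    by (auto intro!: arg_cong2[where f = "(+)"] card_image
        simp: inj_on_def inj_image_eq_iff doubleton_eq_iff)
  finally show ?thesis .
qed

lemma sum_cube_shift:
  fixes d :: "'a \<Rightarrow> nat"
  shows "(\<Sum>x\<in>A. (d x + m) ^ 3)
    = (\<Sum>x\<in>A. d x ^ 3) + 3 * m * (\<Sum>x\<in>A. d x ^ 2) + 3 * m ^ 2 * (\<Sum>x\<in>A. d x) + card A * m ^ 3"
proof -
  have "(d x + m) ^ 3 = d x ^ 3 + 3 * m * d x ^ 2 + 3 * m ^ 2 * d x + m ^ 3" for x
    by (simp add: power3_eq_cube power2_eq_square algebra_simps)
  then show ?thesis by (simp add: sum.distrib sum_distrib_left)
qed

lemma findex_sjoin_split:
  assumes "finite V1" and "finite E1" and "finite V2"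
  shows "findex (sjoin_V V1 E1 V2) E
    = (\<Sum>u\<in>V1. degree E (Old u) ^ 3) + (\<Sum>e\<in>E1. degree E (Ins e) ^ 3)
      + (\<Sum>x\<in>V2. degree E (Right x) ^ 3)"
proof -
  have "findex (sjoin_V V1 E1 V2) E
      = (\<Sum>v\<in>Old ` V1. degree E v ^ 3) + (\<Sum>v\<in>Ins ` E1. degree E v ^ 3)
        + (\<Sum>v\<in>Right ` V2. degree E v ^ 3)"
    unfolding findex_def sjoin_V_def using assms
    by (subst sum.union_disjoint, auto, subst sum.union_disjoint, auto)
  then show ?thesis by (simp add: sum.reindex inj_on_def)
qed

theorem theorem2:
  fixes V1 :: "'a set" and E1 :: "'a set set" and V2 :: "'b set" and E2 :: "'b set set"
  assumes "simple_graph V1 E1" and "connected_graph V1 E1"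
    and "simple_graph V2 E2" and "connected_graph V2 E2"
  shows "findex (sjoin_V V1 E1 V2) (sjoin_E E1 V2 E2)
      = findex V1 E1 + findex V2 E2 + 3 * card E1 * zagreb1 V2 E2
        + 6 * card E1 ^ 2 * card E2 + card E1 * (card V2 + 2) ^ 3
        + card V2 * card E1 ^ 3"
proof -
  note G1 = assms(1) and G2 = assms(3)
  have fin: "finite V1" "finite E1" "finite V2"
    using G1 G2 simple_graph_finite_edges unfolding simple_graph_def by blast+
  have "(\<Sum>e\<in>E1. degree (sjoin_E E1 V2 E2) (Ins e) ^ 3) = card E1 * (card V2 + 2) ^ 3"
    using fin by (simp add: degree_sjoin_Ins simple_graph_edge[OF G1])
  moreover have "(\<Sum>x\<in>V2. degree (sjoin_E E1 V2 E2) (Right x) ^ 3)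
      = findex V2 E2 + 3 * card E1 * zagreb1 V2 E2 + 6 * card E1 ^ 2 * card E2
        + card V2 * card E1 ^ 3"
    using fin by (simp add: degree_sjoin_Right[OF G2] sum_cube_shift handshake[OF G2]
        findex_def zagreb1_def)
  ultimately show ?thesis
    using fin by (simp add: findex_sjoin_split degree_sjoin_Old findex_def[of V1])
qed

end
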